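(* Let $M$ be a left Ehresmann monoid with semilattice of projections $E$ and let $T$ be a submonoid of $M$ with $M=\langle E\cup T\rangle_{(2)}$, such that $M$ has uniqueness of $T$-normal forms. Define a unary operation $*$ on $M$ as follows: if $a=t_0e_1t_1\cdots t_{n-1}e_nt_n$ is the $T$-normal form of $a$, put $a^*=e_n$ if $n\ge1$ and $t_n=1$, and $a^*=1$ otherwise. Then $M$, with $+$ and $*$, is a $*$-left Ehresmann monoid; in particular $a^*$ is the least right identity of $a$ in $E$.
   Context: A left Ehresmann monoid is a monoid $M$ with a unary operation $a\mapsto a^+$ satisfying $x^+x=x$, $(x^+y^+)^+=x^+y^+$, $x^+y^+=y^+x^+$, $(xy)^+=(xy^+)^+$; $E=\{a^+:a\in M\}$ is a semilattice (ordered by $e\le f$ iff $ef=e$). $\langle A\rangle_{(2)}$ is the subsemigroup generated by $A$. For a submonoid $T$ with $M=\langle E\cup T\rangle_{(2)}$, a $T$-normal form of $a\in M$ is an expression $a=t_0e_1t_1\cdots e_nt_n$ with $n\ge0$, $e_1,\dots,e_n\in E\setminus\{1\}$, $t_1,\dots,t_{n-1}\in T\setminus\{1\}$, $t_0,t_n\in T$ and $e_i<(t_ie_{i+1}\cdots e_nt_n)^+$ for $1\le i\le n$; $M$ has uniqueness of $T$-normal forms if each element has exactly one such expression (as a sequence). A $*$-left Ehresmann monoid is a monoid with two unary operations $+,*$ such that $(M,+)$ is left Ehresmann, $M$ satisfies $xx^*=x$, $(x^* )^*=x^*$, $x^*y^*=y^*x^*$, $(xy^* )^*y^*=(xy^*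 )^*$ (equivalently $\{a^*\}$ is a semilattice and $a^*$ is the least right identity of $a$ in it), and $(x^* )^+=x^*$, $(x^+)^*=x^+$. *)

theory Defs
  imports Main
begin

definition left_ehresmann :: "('a::monoid_mult \<Rightarrow> 'a) \<Rightarrow> bool" where
  "left_ehresmann pl \<longleftrightarrow>
     (\<forall>x. pl x * x = x) \<and>
     (\<forall>x y. pl (pl x * pl y) = pl x * pl y) \<and>
     (\<forall>x y. pl x * pl y = pl y * pl x) \<and>
     (\<forall>x y. pl (x * y) = pl (x * pl y))"

definition projs :: "('a::monoid_mult \<Rightarrow> 'a) \<Rightarrow> 'a set" where
  "projs pl = range pl"

definition sl_less :: "'a::monoid_mult \<Rightarrow> 'a \<Rightarrow> bool" where
  "sl_less e f \<longleftrightarrow> e * f = e \<and> e \<noteq> f"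

definition submonoid :: "'a::monoid_mult set \<Rightarrow> bool" where
  "submonoid T \<longleftrightarrow> 1 \<in> T \<and> (\<forall>x\<in>T. \<forall>y\<in>T. x * y \<in> T)"

inductive_set gen2 :: "'a::monoid_mult set \<Rightarrow> 'a set" for A where
  base: "x \<in> A \<Longrightarrow> x \<in> gen2 A"
| mult: "x \<in> gen2 A \<Longrightarrow> y \<in> gen2 A \<Longrightarrow> x * y \<in> gen2 A"

text \<open>A T-normal form t0 e1 t1 ... en tn is represented as (t0, [(e1,t1),...,(en,tn)]).
  eval_tail [(e1,t1),...,(en,tn)] = e1 t1 ... en tn.\<close>
fun eval_tail :: "('a::monoid_mult \<times> 'a) list \<Rightarrow> 'a" where
  "eval_tail [] = 1"
| "eval_tail ((e, t) # rest) = e * t * eval_tail rest"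

definition eval_nf :: "'a::monoid_mult \<times> ('a \<times> 'a) list \<Rightarrow> 'a" where
  "eval_nf nf = fst nf * eval_tail (snd nf)"

fun nf_tail_ok :: "('a::monoid_mult \<Rightarrow> 'a) \<Rightarrow> 'a set \<Rightarrow> ('a \<times> 'a) list \<Rightarrow> bool" where
  "nf_tail_ok pl T [] = True"
| "nf_tail_ok pl T ((e, t) # rest) =
     (e \<in> projs pl - {1} \<and> t \<in> T \<and> (rest \<noteq> [] \<longrightarrow> t \<noteq> 1) \<and>
      sl_less e (pl (t * eval_tail rest)) \<and> nf_tail_ok pl T rest)"

definition is_T_nf :: "('a::monoid_mult \<Rightarrow> 'a) \<Rightarrow> 'a set \<Rightarrow> 'a \<times> ('a \<times> 'a) list \<Rightarrow> 'a \<Rightarrow> bool" where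
  "is_T_nf pl T nf a \<longleftrightarrow> fst nf \<in> T \<and> nf_tail_ok pl T (snd nf) \<and> eval_nf nf = a"

definition unique_T_nf :: "('a::monoid_mult \<Rightarrow> 'a) \<Rightarrow> 'a set \<Rightarrow> bool" where
  "unique_T_nf pl T \<longleftrightarrow> (\<forall>a. \<exists>!nf. is_T_nf pl T nf a)"

definition nf_star :: "('a::monoid_mult \<Rightarrow> 'a) \<Rightarrow> 'a set \<Rightarrow> 'a \<Rightarrow> 'a" where
  "nf_star pl T a =
     (let nf = (THE nf. is_T_nf pl T nf a)
      in if snd nf \<noteq> [] \<and> snd (last (snd nf)) = 1 then fst (last (snd nf)) else 1)"

definition star_left_ehresmann :: "('a::monoid_mult \<Rightarrow> 'a) \<Rightarrow> ('a \<Rightarrow> 'a) \<Rightarrow> bool" where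
  "star_left_ehresmann pl st \<longleftrightarrow>
     left_ehresmann pl \<and>
     (\<forall>x. x * st x = x) \<and>
     (\<forall>x. st (st x) = st x) \<and>
     (\<forall>x y. st x * st y = st y * st x) \<and>
     (\<forall>x y. st (x * st y) * st y = st (x * st y)) \<and>
     (\<forall>x. pl (st x) = st x) \<and>
     (\<forall>x. st (pl x) = pl x)"

end

theory Submission
  imports Defs
begin

text \<open>For a projection \<open>e \<noteq> 1\<close>, every element of the form \<open>a e\<close> has a \<open>T\<close>-normal form
  ending in \<open>f\<cdot>1\<close> with \<open>f \<le> e\<close>: this holds for \<open>e\<close> itself, and it is preserved by left
  multiplication with an element of \<open>T\<close> (absorbed into \<open>t\<^sub>0\<close>) and with a projection \<open>h\<close>
  (which either merges into the first projection of the normal form or becomes a new one,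
  \<open>h a = (h a\<^sup>+) a\<close>). Hence if \<open>a e = a\<close>, uniqueness of normal forms gives \<open>a\<^sup>* = f \<le> e\<close>,
  so \<open>a\<^sup>*\<close> is the least right identity of \<open>a\<close> in \<open>E\<close>, and the \<open>*\<close>-axioms follow from that.\<close>

lemma pl_in_projs: "pl x \<in> projs pl"
  unfolding projs_def by simp

lemma sl_less_neq_one: "sl_less e f \<Longrightarrow> e \<noteq> 1"
  unfolding sl_less_def by auto

lemma eval_tail_append: "eval_tail (xs @ ys) = eval_tail xs * eval_tail ys"
  by (induction xs rule: eval_tail.induct) (auto simp: mult.assoc)

lemma nf_tail_ok_mem: "nf_tail_ok pl T L \<Longrightarrow> (e, t) \<in> set L \<Longrightarrow> e \<in> projs pl"
  by (induction L) force+

lemma is_T_nf_mult_T: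
  assumes "submonoid T" "t \<in> T" "is_T_nf pl T (t\<^sub>0, L) x"
  shows "is_T_nf pl T (t * t\<^sub>0, L) (t * x)"
  using assms unfolding is_T_nf_def submonoid_def eval_nf_def by (auto simp: mult.assoc)

definition nf_ends_below :: "('a::monoid_mult \<Rightarrow> 'a) \<Rightarrow> 'a set \<Rightarrow> 'a \<Rightarrow> 'a \<Rightarrow> bool" where
  "nf_ends_below pl T e a \<longleftrightarrow> (\<exists>t\<^sub>0 L f. is_T_nf pl T (t\<^sub>0, L @ [(f, 1)]) a \<and> f * e = f)"

lemma nf_ends_below_mult_T:
  "submonoid T \<Longrightarrow> t \<in> T \<Longrightarrow> nf_ends_below pl T e x \<Longrightarrow> nf_ends_below pl T e (t * x)"
  unfolding nf_ends_below_def by (metis is_T_nf_mult_T)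

locale left_ehresmann_monoid =
  fixes pl :: "'a::monoid_mult \<Rightarrow> 'a"
  assumes left_ehresmann: "left_ehresmann pl"
begin

lemma pl_mult_self: "pl x * x = x"
  using left_ehresmann unfolding left_ehresmann_def by blast

lemma pl_mult_pl: "pl (pl x * pl y) = pl x * pl y"
  using left_ehresmann unfolding left_ehresmann_def by blast

lemma pl_comm: "pl x * pl y = pl y * pl x"
  using left_ehresmann unfolding left_ehresmann_def by blast

lemma pl_one: "pl 1 = 1"
  using pl_mult_self[of 1] by simp

lemma pl_proj: "e \<in> projs pl \<Longrightarrow> pl e = e"
  unfolding projs_def using pl_mult_pl[of _ 1] pl_one by auto

lemma proj_idem: "e \<in> projs pl \<Longrightarrow> e * e = e"
  using pl_mult_self pl_proj by metis

lemma proj_comm: "e \<in> projs pl \<Longrightarrow> f \<in> projs pl \<Longrightarrow> e * f = f * e"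
  unfolding projs_def using pl_comm by auto

lemma proj_mult_closed:
  assumes "e \<in> projs pl" and "f \<in> projs pl"
  shows "e * f \<in> projs pl"
proof -
  obtain x y where "e = pl x" and "f = pl y"
    using assms unfolding projs_def by blast
  then have "e * f = pl (pl x * pl y)"
    using pl_mult_pl by simp
  then show ?thesis unfolding projs_def by blast
qed

lemma one_in_projs: "1 \<in> projs pl"
  unfolding projs_def using pl_one by (metis rangeI)

lemma proj_mult_sl_less:
  assumes h: "h \<in> projs pl" and e: "e \<in> projs pl" and "sl_less e f"
  shows "sl_less (h * e) f"
proof -
  have ef: "e * f = e" and "e \<noteq> f"
    using \<open>sl_less e f\<close> unfolding sl_less_def by auto
  have "h * e \<noteq> f"
  proof
    assume "h * e = f"
    then have "e = e * (h * e)" using ef by simp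
    also have "\<dots> = h * e"
      using proj_comm[OF e h] proj_idem[OF e] by (metis mult.assoc)
    finally show False using \<open>h * e = f\<close> \<open>e \<noteq> f\<close> by simp
  qed
  then show ?thesis using ef unfolding sl_less_def by (simp add: mult.assoc)
qed

lemma proj_mult_sl_less_self:
  assumes "p \<in> projs pl" and "h * p \<noteq> p"
  shows "sl_less (h * p) p"
  using assms proj_idem unfolding sl_less_def by (simp add: mult.assoc)

lemma is_T_nf_proj:
  assumes "1 \<in> T" and "e \<in> projs pl" and "e \<noteq> 1"
  shows "is_T_nf pl T (1, [(e, 1)]) e"
  using assms unfolding is_T_nf_def eval_nf_def by (simp add: pl_one sl_less_def)

lemma is_T_nf_mult_proj_head:
  assumes h: "h \<in> projs pl" and nf: "is_T_nf pl T (1, (e\<^sub>1, t\<^sub>1) # rest) x"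
  shows "is_T_nf pl T (1, (h * e\<^sub>1, t\<^sub>1) # rest) (h * x)"
proof -
  have e\<^sub>1: "e\<^sub>1 \<in> projs pl" and "sl_less e\<^sub>1 (pl (t\<^sub>1 * eval_tail rest))"
    using nf unfolding is_T_nf_def by auto
  then have "sl_less (h * e\<^sub>1) (pl (t\<^sub>1 * eval_tail rest))"
    using proj_mult_sl_less[OF h] by blast
  then show ?thesis
    using nf proj_mult_closed[OF h e\<^sub>1] sl_less_neq_one
    unfolding is_T_nf_def eval_nf_def by (auto simp: mult.assoc)
qed

lemma is_T_nf_mult_proj_new:
  assumes "1 \<in> T" and h: "h \<in> projs pl" and nf: "is_T_nf pl T (t\<^sub>0, L) x"
    and "t\<^sub>0 \<noteq> 1" and hx: "h * pl x \<noteq> pl x"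
  shows "is_T_nf pl T (1, (h * pl x, t\<^sub>0) # L) (h * x)"
proof -
  have x: "x = t\<^sub>0 * eval_tail L"
    using nf unfolding is_T_nf_def eval_nf_def by simp
  have sl: "sl_less (h * pl x) (pl x)"
    using proj_mult_sl_less_self[OF pl_in_projs hx] .
  have "h * x = h * pl x * x"
    using pl_mult_self by (simp add: mult.assoc)
  then show ?thesis
    using assms sl sl_less_neq_one[OF sl] proj_mult_closed[OF h pl_in_projs]
    unfolding is_T_nf_def eval_nf_def x by (auto simp: mult.assoc)
qed

lemma nf_ends_below_proj:
  assumes "1 \<in> T" and "e \<in> projs pl" and "e \<noteq> 1"
  shows "nf_ends_below pl T e e"
proof -
  have "is_T_nf pl T (1, [] @ [(e, 1)]) e"
    using is_T_nf_proj[OF assms] by simp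
  then show ?thesis
    using proj_idem[OF assms(2)] unfolding nf_ends_below_def by blast
qed

lemma nf_ends_below_mult_proj:
  assumes "1 \<in> T" and h: "h \<in> projs pl" and "nf_ends_below pl T e x"
  shows "nf_ends_below pl T e (h * x)"
proof -
  obtain t\<^sub>0 L f where nf: "is_T_nf pl T (t\<^sub>0, L @ [(f, 1)]) x" and fe: "f * e = f"
    using \<open>nf_ends_below pl T e x\<close> unfolding nf_ends_below_def by blast
  consider "t\<^sub>0 = 1" | "t\<^sub>0 \<noteq> 1" "h * pl x = pl x" | "t\<^sub>0 \<noteq> 1" "h * pl x \<noteq> pl x"
    by blast
  then show ?thesis
  proof cases
    case 1
    show ?thesis
    proof (cases L)
      case Nil
      then have "is_T_nf pl T (1, [] @ [(h * f, 1)]) (h * x)"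
        using is_T_nf_mult_proj_head[OF h] nf 1 by simp
      then show ?thesis using fe unfolding nf_ends_below_def by (metis mult.assoc)
    next
      case (Cons p L')
      then have "is_T_nf pl T (1, ((h * fst p, snd p) # L') @ [(f, 1)]) (h * x)"
        using is_T_nf_mult_proj_head[OF h] nf 1 by (cases p) simp
      then show ?thesis using fe unfolding nf_ends_below_def by blast
    qed
  next
    case 2
    then have "h * x = x"
      using pl_mult_self by (metis mult.assoc)
    then show ?thesis using nf fe unfolding nf_ends_below_def by auto
  next
    case 3
    then have "is_T_nf pl T (1, ((h * pl x, t\<^sub>0) # L) @ [(f, 1)]) (h * x)"
      using is_T_nf_mult_proj_new[OF \<open>1 \<in> T\<close> h nf] by simp
    then show ?thesis using fe unfolding nf_ends_below_def by blast
  qed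
qed

lemma nf_ends_below_mult_gen2:
  assumes "submonoid T"
  shows "z \<in> gen2 (projs pl \<union> T) \<Longrightarrow> nf_ends_below pl T e x \<Longrightarrow> nf_ends_below pl T e (z * x)"
proof (induction arbitrary: x rule: gen2.induct)
  case (base z)
  show ?case
  proof (cases "z \<in> T")
    case True
    show ?thesis by (rule nf_ends_below_mult_T[OF assms True base.prems])
  next
    case False
    then have "z \<in> projs pl" using base.hyps by blast
    moreover have "1 \<in> T" using assms unfolding submonoid_def by blast
    ultimately show ?thesis using nf_ends_below_mult_proj base.prems by blast
  qed
next
  case (mult y z)
  then show ?case by (simp add: mult.assoc)
qed

lemma nf_ends_below_mult_proj_right:
  assumes "submonoid T" and "gen2 (projs pl \<union> T) = UNIV"
    and "e \<in> projs pl" and "e \<noteq> 1"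
  shows "nf_ends_below pl T e (a * e)"
proof -
  have "1 \<in> T" using assms(1) unfolding submonoid_def by blast
  then show ?thesis
    using nf_ends_below_mult_gen2[OF assms(1), of a] nf_ends_below_proj assms(2-4) by simp
qed

lemma nf_star_eq:
  assumes "unique_T_nf pl T" and "is_T_nf pl T nf a"
  shows "nf_star pl T a =
    (if snd nf \<noteq> [] \<and> snd (last (snd nf)) = 1 then fst (last (snd nf)) else 1)"
proof -
  have "(THE nf. is_T_nf pl T nf a) = nf"
    using assms unfolding unique_T_nf_def by (simp add: the1_equality)
  then show ?thesis unfolding nf_star_def by simp
qed

lemma nf_star_snoc:
  assumes "unique_T_nf pl T" and "is_T_nf pl T (t\<^sub>0, L @ [(f, 1)]) a"
  shows "nf_star pl T a = f"
  using nf_star_eq[OF assms] by simp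

lemma nf_star_cases:
  assumes "unique_T_nf pl T"
  obtains "nf_star pl T a = 1"
  | t\<^sub>0 L f where "is_T_nf pl T (t\<^sub>0, L @ [(f, 1)]) a" and "nf_star pl T a = f"
proof -
  obtain nf where nf: "is_T_nf pl T nf a"
    using assms unfolding unique_T_nf_def by blast
  show ?thesis
  proof (cases "snd nf \<noteq> [] \<and> snd (last (snd nf)) = 1")
    case True
    then have "nf = (fst nf, butlast (snd nf) @ [(fst (last (snd nf)), 1)])"
      by (metis append_butlast_last_id prod.collapse)
    then show ?thesis
      using that(2) nf nf_star_snoc[OF assms] by metis
  next
    case False
    then have "nf_star pl T a = 1"
      using nf_star_eq[OF assms nf] by argo
    then show ?thesis by (rule that(1))
  qed
qed

lemma nf_star_in_projs:
  assumes "unique_T_nf pl T"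
  shows "nf_star pl T a \<in> projs pl"
proof (cases rule: nf_star_cases[OF assms, of a])
  case (2 t\<^sub>0 L f)
  then show ?thesis unfolding is_T_nf_def by (auto dest: nf_tail_ok_mem)
qed (simp add: one_in_projs)

lemma mult_nf_star:
  assumes "unique_T_nf pl T"
  shows "a * nf_star pl T a = a"
proof (cases rule: nf_star_cases[OF assms, of a])
  case (2 t\<^sub>0 L f)
  then have "f \<in> projs pl" and "a = t\<^sub>0 * eval_tail L * f"
    unfolding is_T_nf_def eval_nf_def
    by (auto dest: nf_tail_ok_mem simp: eval_tail_append mult.assoc)
  then show ?thesis using 2 proj_idem by (simp add: mult.assoc)
qed simp

lemma nf_star_least:
  assumes "submonoid T" and "gen2 (projs pl \<union> T) = UNIV" and "unique_T_nf pl T"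
    and "e \<in> projs pl" and "a * e = a"
  shows "nf_star pl T a * e = nf_star pl T a"
proof (cases "e = 1")
  case False
  then obtain t\<^sub>0 L f where "is_T_nf pl T (t\<^sub>0, L @ [(f, 1)]) a" and "f * e = f"
    using nf_ends_below_mult_proj_right[OF assms(1,2,4) False, of a] \<open>a * e = a\<close>
    unfolding nf_ends_below_def by auto
  then show ?thesis using nf_star_snoc[OF assms(3)] by simp
qed simp

lemma star_left_ehresmann_if_least_right_identity:
  assumes st: "\<And>a. st a \<in> projs pl" and right_id: "\<And>a. a * st a = a"
    and least: "\<And>a e. e \<in> projs pl \<Longrightarrow> a * e = a \<Longrightarrow> st a * e = st a"
  shows "star_left_ehresmann pl st"
proof -
  have st_proj: "st e = e" if "e \<in> projs pl" for e
  proof -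
    have "st e * e = st e"
      using least[OF that] proj_idem[OF that] by blast
    then show ?thesis
      using right_id[of e] proj_comm[OF st that] by simp
  qed
  have "st (x * st y) * st y = st (x * st y)" for x y
    using least[OF st] proj_idem[OF st] by (metis mult.assoc)
  then show ?thesis
    unfolding star_left_ehresmann_def
    using left_ehresmann right_id st_proj[OF st] proj_comm[OF st st] pl_proj[OF st]
      st_proj[OF pl_in_projs]
    by simp
qed

end

theorem mainTheorem2:
  fixes pl :: "'a::monoid_mult \<Rightarrow> 'a" and T :: "'a set"
  assumes "left_ehresmann pl"
    and "submonoid T"
    and "gen2 (projs pl \<union> T) = UNIV"
    and "unique_T_nf pl T"
  shows "star_left_ehresmann pl (nf_star pl T) \<and>
         (\<forall>a. nf_star pl T a \<in> projs pl \<and> a * nf_star pl T a = a \<and>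
              (\<forall>e\<in>projs pl. a * e = a \<longrightarrow> nf_star pl T a * e = nf_star pl T a))"
proof -
  interpret left_ehresmann_monoid pl
    by (rule left_ehresmann_monoid.intro) (rule assms(1))
  have least_right_identity:
    "nf_star pl T a \<in> projs pl \<and> a * nf_star pl T a = a \<and>
     (\<forall>e\<in>projs pl. a * e = a \<longrightarrow> nf_star pl T a * e = nf_star pl T a)" for a
    using nf_star_in_projs mult_nf_star nf_star_least assms(2-4) by simp
  then show ?thesis
    using star_left_ehresmann_if_least_right_identity by simp
qed

end
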